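(* Let $N\geq 1$, let $U\in M_{2N}(\mathbb{C})$ be unitary with $U^{\rm T}=-U$, and let $\Phi^U_{4N}$ be the map defined on block matrices $X=\begin{pmatrix} X_{11} & X_{12}\\ X_{21} & X_{22}\end{pmatrix}$ ($X_{kl}\in M_{2N}(\mathbb{C})$) by $$\Phi^U_{4N}(X)=\frac{1}{2N}\begin{pmatrix} \mathbb{I}_{2N}\,\mathrm{Tr}X_{22} & -\big(X_{12}+UX_{21}^{\rm T}U^\dagger\big)\\ -\big(X_{21}+UX_{12}^{\rm T}U^\dagger\big) & \mathbb{I}_{2N}\,\mathrm{Tr}X_{11}\end{pmatrix}.$$ Let $P^+_{4N}=\frac{1}{4N}\sum_{k,l=1}^{4N}|k\rangle\langle l|\otimes|k\rangle\langle l|$, $W^U_{4N}=(\mathrm{id}\otimes\Phi^U_{4N})P^+_{4N}$, and for $\lambda\in[0,1]$ let $\rho_\lambda=\frac{\lambda}{(4N)^2}\mathbb{I}_{4N}\otimes\mathbb{I}_{4N}+(1-\lambda)P^+_{4N}$ be the isotropic state. If $\rho_\lambda$ is entangled, equivalently if $\lambda<\frac{4N}{4N+1}$, then $\mathrm{Tr}(W^U_{4N}\rho_\lambda)<0$.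
   Context: $\{|k\rangle\}$ is the standard basis of $\mathbb{C}^{4N}$; $\mathrm{id}$ is the identity map on $M_{4N}(\mathbb{C})$. *)

theory Defs
  imports "Jordan_Normal_Form.Matrix" "HOL-Library.Complex_Order"
begin

text \<open>Standard basis vectors are indexed from 0; the tensor product of an n x n and an m x m
  matrix uses the basis ordering |i> (x) |j> |-> i*m + j (Kronecker product).\<close>

definition mtrace :: "complex mat \<Rightarrow> complex" where
  "mtrace A = (\<Sum>i<dim_row A. A $$ (i, i))"

definition adj :: "complex mat \<Rightarrow> complex mat" where
  "adj A = mat (dim_col A) (dim_row A) (\<lambda>(i, j). cnj (A $$ (j, i)))"

definition unitary_mat :: "nat \<Rightarrow> complex mat \<Rightarrow> bool" where
  "unitary_mat n U \<longleftrightarrow> U \<in> carrier_mat n n \<and> U * adj U = 1\<^sub>m n \<and> adj U * U = 1\<^sub>m n"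

definition kron :: "complex mat \<Rightarrow> complex mat \<Rightarrow> complex mat" where
  "kron A B = mat (dim_row A * dim_row B) (dim_col A * dim_col B)
     (\<lambda>(i, j). A $$ (i div dim_row B, j div dim_col B) * B $$ (i mod dim_row B, j mod dim_col B))"

definition ket_bra :: "nat \<Rightarrow> nat \<Rightarrow> nat \<Rightarrow> complex mat" where
  "ket_bra n k l = mat n n (\<lambda>(i, j). if i = k \<and> j = l then 1 else 0)"

definition PhiU :: "nat \<Rightarrow> complex mat \<Rightarrow> complex mat \<Rightarrow> complex mat" where
  "PhiU N U X = (let m = 2 * N; (X11, X12, X21, X22) = split_block X m m in
     (1 / of_nat (2 * N)) \<cdot>\<^sub>m
       four_block_mat (mtrace X22 \<cdot>\<^sub>m 1\<^sub>m m) (- (X12 + U * transpose_mat X21 * adj U))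
                      (- (X21 + U * transpose_mat X12 * adj U)) (mtrace X11 \<cdot>\<^sub>m 1\<^sub>m m))"

text \<open>(id_n (x) Phi) applied to an (n*m) x (n*m) matrix M: Phi (on M_m) is applied to each
  m x m block M_{kl} of M, i.e. (id (x) Phi)(sum |k><l| (x) M_{kl}) = sum |k><l| (x) Phi(M_{kl}).\<close>
definition id_tensor :: "nat \<Rightarrow> nat \<Rightarrow> (complex mat \<Rightarrow> complex mat) \<Rightarrow> complex mat \<Rightarrow> complex mat" where
  "id_tensor n m \<Phi> M = mat (n * m) (n * m) (\<lambda>(a, b).
     \<Phi> (mat m m (\<lambda>(i, j). M $$ ((a div m) * m + i, (b div m) * m + j))) $$ (a mod m, b mod m))"

definition Pplus :: "nat \<Rightarrow> complex mat" where
  "Pplus n = (1 / of_nat n) \<cdot>\<^sub>m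
     mat (n * n) (n * n) (\<lambda>(a, b). \<Sum>k<n. \<Sum>l<n. kron (ket_bra n k l) (ket_bra n k l) $$ (a, b))"

definition WU :: "nat \<Rightarrow> complex mat \<Rightarrow> complex mat" where
  "WU N U = id_tensor (4 * N) (4 * N) (PhiU N U) (Pplus (4 * N))"

definition iso_state :: "nat \<Rightarrow> real \<Rightarrow> complex mat" where
  "iso_state n lam = (complex_of_real (lam / (real n)\<^sup>2)) \<cdot>\<^sub>m kron (1\<^sub>m n) (1\<^sub>m n)
                   + complex_of_real (1 - lam) \<cdot>\<^sub>m Pplus n"

end

theory Submission
  imports Defs
begin

text \<open>Write n = 4N. The isotropic state is rho = lam/n^2 * 1 + (1 - lam) * P+, so
  Tr (W rho) = lam/n^2 * Tr W + (1 - lam) * Tr (W P+). Since Phi is trace preserving,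
  Tr W = Tr P+ = 1. Pairing with P+ picks out the entries <kk|W|ll> = Phi(|k><l|)_(k,l) / n,
  which vanish when k and l lie in the same half of the basis and equal -1/(2N n) otherwise;
  there are n^2/2 such pairs, so Tr (W P+) = -1/n. Hence Tr (W rho) = lam/n^2 - (1 - lam)/n,
  which is negative exactly when lam < n/(n+1).\<close>

lemma sum_lessThan_mult:
  fixes f :: "nat \<Rightarrow> 'a::comm_monoid_add"
  shows "(\<Sum>a<m * n. f a) = (\<Sum>k<m. \<Sum>i<n. f (k * n + i))"
proof -
  have "(\<Sum>a<m * n. f a) = (\<Sum>k<m. \<Sum>a\<in>{k * n..<k * n + n}. f a)"
    using sum.nat_group[of f n m] by simp
  also have "\<dots> = (\<Sum>k<m. \<Sum>i<n. f (k * n + i))"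
  proof (rule sum.cong[OF refl])
    fix k
    show "(\<Sum>a\<in>{k * n..<k * n + n}. f a) = (\<Sum>i<n. f (k * n + i))"
      using sum.shift_bounds_nat_ivl[of f 0 "k * n" n] by (simp add: atLeast0LessThan add.commute)
  qed
  finally show ?thesis .
qed

lemma sum_if_lower_half:
  "(\<Sum>i<2 * m. if (i < m) = P then c else 0) = of_nat m * (c::'a::semiring_1)"
proof -
  let ?f = "\<lambda>i. if (i < m) = P then c else 0"
  have "(\<Sum>i<2 * m. ?f i) = (\<Sum>i\<in>{..<m} \<union> {m..<2 * m}. ?f i)"
    by (intro sum.cong) auto
  also have "\<dots> = (\<Sum>i<m. ?f i) + (\<Sum>i\<in>{m..<2 * m}. ?f i)"
    by (intro sum.union_disjoint) auto
  also have "\<dots> = (\<Sum>i<m. if P then c else 0) + (\<Sum>i\<in>{m..<2 * m}. if P then 0 else c)"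
    by (intro arg_cong2[where f = "(+)"] sum.cong) auto
  finally show ?thesis by (cases P) simp_all
qed

lemma mult_add_less_mult_nat: "k < m \<Longrightarrow> i < n \<Longrightarrow> k * n + i < m * (n::nat)"
proof -
  assume "k < m" "i < n"
  then have "k * n + i < (k + 1) * n" by simp
  also have "\<dots> \<le> m * n" using \<open>k < m\<close> by (intro mult_right_mono) auto
  finally show ?thesis .
qed

lemma ket_bra_carrier: "ket_bra n k l \<in> carrier_mat n n"
  by (simp add: ket_bra_def)

lemma Pplus_carrier: "Pplus n \<in> carrier_mat (n * n) (n * n)"
  by (simp add: Pplus_def)

lemma mtrace_add:
  "A \<in> carrier_mat n n \<Longrightarrow> B \<in> carrier_mat n n \<Longrightarrow> mtrace (A + B) = mtrace A + mtrace B"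
  by (simp add: mtrace_def sum.distrib)

lemma mtrace_smult: "A \<in> carrier_mat n n \<Longrightarrow> mtrace (c \<cdot>\<^sub>m A) = c * mtrace A"
  by (simp add: mtrace_def sum_distrib_left)

lemma mtrace_one_mat: "mtrace (1\<^sub>m n) = of_nat n"
  by (simp add: mtrace_def)

lemma mtrace_ket_bra: "k < n \<Longrightarrow> mtrace (ket_bra n k k) = 1"
  by (simp add: mtrace_def ket_bra_def)

lemma mtrace_four_block_mat:
  assumes "A \<in> carrier_mat n n" "D \<in> carrier_mat m m"
  shows "mtrace (four_block_mat A B C D) = mtrace A + mtrace D"
proof -
  have "mtrace (four_block_mat A B C D) = (\<Sum>i\<in>{..<n} \<union> {n..<n + m}. four_block_mat A B C D $$ (i, i))"
    unfolding mtrace_def using assms by (intro sum.cong) auto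
  also have "\<dots> = (\<Sum>i<n. four_block_mat A B C D $$ (i, i))
      + (\<Sum>i\<in>{n..<n + m}. four_block_mat A B C D $$ (i, i))"
    by (rule sum.union_disjoint) auto
  also have "\<dots> = (\<Sum>i<n. A $$ (i, i)) + (\<Sum>i\<in>{n..<n + m}. D $$ (i - n, i - n))"
    using assms by (intro arg_cong2[where f = "(+)"] sum.cong) auto
  also have "(\<Sum>i\<in>{n..<n + m}. D $$ (i - n, i - n)) = (\<Sum>i<m. D $$ (i, i))"
    using sum.shift_bounds_nat_ivl[of "\<lambda>i. D $$ (i - n, i - n)" 0 n m]
    by (simp add: atLeast0LessThan add.commute)
  finally show ?thesis
    using assms by (simp add: mtrace_def)
qed

lemma mtrace_split_block:
  assumes "X \<in> carrier_mat (n + m) (n + m)" "split_block X n n = (A, B, C, D)"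
  shows "mtrace X = mtrace A + mtrace D"
  using split_block[OF assms(2), of m m] assms(1) mtrace_four_block_mat by auto

lemma PhiU_carrier: "PhiU N U X \<in> carrier_mat (4 * N) (4 * N)"
  by (rule carrier_matI) (simp_all add: PhiU_def Let_def case_prod_beta)

lemma mtrace_PhiU:
  assumes "0 < N" "X \<in> carrier_mat (4 * N) (4 * N)"
  shows "mtrace (PhiU N U X) = mtrace X"
proof -
  obtain X11 X12 X21 X22 where blocks: "split_block X (2 * N) (2 * N) = (X11, X12, X21, X22)"
    by (metis prod_cases4)
  have X: "X \<in> carrier_mat (2 * N + 2 * N) (2 * N + 2 * N)"
    using assms(2) by simp
  define D11 where "D11 = mtrace X22 \<cdot>\<^sub>m 1\<^sub>m (2 * N)"
  define D22 where "D22 = mtrace X11 \<cdot>\<^sub>m 1\<^sub>m (2 * N)"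
  define A where "A = four_block_mat D11
    (- (X12 + U * transpose_mat X21 * adj U)) (- (X21 + U * transpose_mat X12 * adj U)) D22"
  have D: "D11 \<in> carrier_mat (2 * N) (2 * N)" "D22 \<in> carrier_mat (2 * N) (2 * N)"
    by (simp_all add: D11_def D22_def)
  have A: "A \<in> carrier_mat (2 * N + 2 * N) (2 * N + 2 * N)"
    unfolding A_def using D by (rule four_block_carrier_mat)
  have Phi: "PhiU N U X = (1 / of_nat (2 * N)) \<cdot>\<^sub>m A"
    by (simp add: PhiU_def blocks A_def D11_def D22_def Let_def)
  have "mtrace A = of_nat (2 * N) * (mtrace X11 + mtrace X22)"
    unfolding A_def mtrace_four_block_mat[OF D]
    by (simp add: D11_def D22_def mtrace_smult[OF one_carrier_mat] mtrace_one_mat algebra_simps)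
  then have "mtrace (PhiU N U X) = mtrace X11 + mtrace X22"
    using assms(1) by (simp add: Phi mtrace_smult[OF A])
  also have "\<dots> = mtrace X"
    using mtrace_split_block[OF X blocks] by simp
  finally show ?thesis .
qed

lemma smult_ket_bra: "c \<cdot>\<^sub>m ket_bra n k l = mat n n (\<lambda>(i, j). if i = k \<and> j = l then c else 0)"
  by (auto simp: ket_bra_def)

lemma index_PhiU_ket_bra:
  assumes "0 < N" "k < 4 * N" "l < 4 * N" "U \<in> carrier_mat (2 * N) (2 * N)"
  shows "PhiU N U (c \<cdot>\<^sub>m ket_bra (4 * N) k l) $$ (k, l)
    = (if (k < 2 * N) = (l < 2 * N) then 0 else - c / of_nat (2 * N))"
proof -
  let ?X = "mat (4 * N) (4 * N) (\<lambda>(i, j). if i = k \<and> j = l then c else 0)"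
  let ?O = "0\<^sub>m (2 * N) (2 * N) :: complex mat"
  have upper_zero:
    "mat (2 * N) (2 * N) (($$) ?X) = ?O"
    "mat (2 * N) (2 * N) (\<lambda>(i, j). ?X $$ (i, j + 2 * N)) = ?O" if "2 * N \<le> k"
    using that assms by auto
  have lower_zero:
    "mat (2 * N) (2 * N) (\<lambda>(i, j). ?X $$ (i + 2 * N, j)) = ?O"
    "mat (2 * N) (2 * N) (\<lambda>(i, j). ?X $$ (i + 2 * N, j + 2 * N)) = ?O" if "k < 2 * N"
    using that assms by auto
  have dim_U: "dim_row U = 2 * N" "dim_col U = 2 * N"
    "dim_row (adj U) = 2 * N" "dim_col (adj U) = 2 * N"
    using assms(4) by (auto simp: adj_def)
  have "mtrace ?O = 0"
    by (simp add: mtrace_def)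
  then show ?thesis
    using assms unfolding smult_ket_bra PhiU_def split_block_def Let_def
    by (cases "k < 2 * N") (simp_all add: upper_zero lower_zero dim_U)
qed

lemma index_id_tensor:
  assumes "k < n" "l < n" "i < m" "j < m"
  shows "id_tensor n m \<Phi> M $$ (k * m + i, l * m + j)
    = \<Phi> (mat m m (\<lambda>(i', j'). M $$ (k * m + i', l * m + j'))) $$ (i, j)"
  using assms by (simp add: id_tensor_def mult_add_less_mult_nat)

lemma index_Pplus:
  assumes "k < n" "i < n" "l < n" "j < n"
  shows "Pplus n $$ (k * n + i, l * n + j) = (if k = i \<and> l = j then 1 / of_nat n else 0)"
proof -
  define e :: complex where "e = (if k = i \<and> l = j then 1 else 0)"
  have "Pplus n $$ (k * n + i, l * n + j)
      = 1 / of_nat n * (\<Sum>k'<n. \<Sum>l'<n. kron (ket_bra n k' l') (ket_bra n k' l') $$ (k * n + i, l * n + j))"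
    using assms by (simp add: Pplus_def mult_add_less_mult_nat)
  also have "\<dots> = 1 / of_nat n * (\<Sum>k'<n. \<Sum>l'<n. if k' = k then if l' = l then e else 0 else 0)"
    using assms by (intro arg_cong2[where f = "(*)"] sum.cong refl)
      (auto simp: kron_def ket_bra_def mult_add_less_mult_nat e_def)
  also have "\<dots> = 1 / of_nat n * (\<Sum>k'<n. if k' = k then e else 0)"
    using assms by (intro arg_cong2[where f = "(*)"] sum.cong refl) simp_all
  also have "\<dots> = 1 / of_nat n * e"
    using assms by simp
  finally show ?thesis by (simp add: e_def)
qed

lemma Pplus_block:
  assumes "k < n" "l < n"
  shows "mat n n (\<lambda>(i, j). Pplus n $$ (k * n + i, l * n + j)) = (1 / of_nat n) \<cdot>\<^sub>m ket_bra n k l"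
  using assms by (intro eq_matI) (auto simp: index_Pplus ket_bra_def)

lemma WU_carrier: "WU N U \<in> carrier_mat (4 * N * (4 * N)) (4 * N * (4 * N))"
  by (simp add: WU_def id_tensor_def)

lemma index_WU:
  assumes "k < 4 * N" "l < 4 * N" "i < 4 * N" "j < 4 * N"
  shows "WU N U $$ (k * (4 * N) + i, l * (4 * N) + j)
    = PhiU N U ((1 / of_nat (4 * N)) \<cdot>\<^sub>m ket_bra (4 * N) k l) $$ (i, j)"
  using assms by (simp add: WU_def index_id_tensor Pplus_block)

lemma index_mult_Pplus_diag:
  assumes "A \<in> carrier_mat (n * n) (n * n)" "k < n" "i < n"
  shows "(A * Pplus n) $$ (k * n + i, k * n + i)
    = (if i = k then (\<Sum>l<n. A $$ (k * n + k, l * n + l)) / of_nat n else 0)"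
proof -
  have "(A * Pplus n) $$ (k * n + i, k * n + i)
      = (\<Sum>l<n. \<Sum>j<n. A $$ (k * n + i, l * n + j) * Pplus n $$ (l * n + j, k * n + i))"
    using assms Pplus_carrier[of n]
    by (simp add: mult_add_less_mult_nat scalar_prod_def atLeast0LessThan sum_lessThan_mult)
  also have "\<dots> = (\<Sum>l<n. \<Sum>j<n. if i = k \<and> l = j then A $$ (k * n + k, l * n + l) / of_nat n
      else 0)"
    using assms by (intro sum.cong refl) (auto simp: index_Pplus)
  also have "\<dots> = (if i = k then (\<Sum>l<n. A $$ (k * n + k, l * n + l) / of_nat n) else 0)"
    by (cases "i = k") (simp_all cong: sum.cong_simp)
  finally show ?thesis
    by (simp add: sum_divide_distrib)
qed

lemma mtrace_mult_Pplus:
  assumes "A \<in> carrier_mat (n * n) (n * n)"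
  shows "mtrace (A * Pplus n) = (\<Sum>k<n. \<Sum>l<n. A $$ (k * n + k, l * n + l)) / of_nat n"
proof -
  have "mtrace (A * Pplus n) = (\<Sum>k<n. \<Sum>i<n. (A * Pplus n) $$ (k * n + i, k * n + i))"
    using assms by (simp add: mtrace_def sum_lessThan_mult)
  also have "\<dots> = (\<Sum>k<n. (\<Sum>l<n. A $$ (k * n + k, l * n + l)) / of_nat n)"
    using assms by (intro sum.cong refl) (simp add: index_mult_Pplus_diag)
  finally show ?thesis
    by (simp add: sum_divide_distrib)
qed

lemma mtrace_WU:
  assumes "0 < N"
  shows "mtrace (WU N U) = 1"
proof -
  let ?n = "4 * N"
  have "mtrace (WU N U) = (\<Sum>k<?n. \<Sum>i<?n. WU N U $$ (k * ?n + i, k * ?n + i))"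
    using WU_carrier[of N U] sum_lessThan_mult[of _ "4 * N" "4 * N"] by (simp add: mtrace_def)
  also have "\<dots> = (\<Sum>k<?n. mtrace (PhiU N U ((1 / of_nat ?n) \<cdot>\<^sub>m ket_bra ?n k k)))"
    by (intro sum.cong refl) (simp add: index_WU mtrace_def carrier_matD[OF PhiU_carrier])
  also have "\<dots> = (\<Sum>k<?n. 1 / of_nat ?n)"
    using assms by (intro sum.cong refl)
      (simp add: mtrace_PhiU ket_bra_carrier mtrace_smult[OF ket_bra_carrier] mtrace_ket_bra)
  also have "\<dots> = 1"
    using assms by simp
  finally show ?thesis .
qed

lemma mtrace_WU_mult_Pplus:
  assumes "0 < N" "U \<in> carrier_mat (2 * N) (2 * N)"
  shows "mtrace (WU N U * Pplus (4 * N)) = - 1 / of_nat (4 * N)"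
proof -
  let ?n = "4 * N"
  define d :: complex where "d = - (1 / of_nat ?n) / of_nat (2 * N)"
  have "(\<Sum>k<?n. \<Sum>l<?n. WU N U $$ (k * ?n + k, l * ?n + l))
      = (\<Sum>k<?n. \<Sum>l<2 * (2 * N). if (l < 2 * N) = (\<not> k < 2 * N) then d else 0)"
    using assms by (intro sum.cong refl) (auto simp: index_WU index_PhiU_ket_bra d_def)
  also have "\<dots> = (\<Sum>k<?n. of_nat (2 * N) * d)"
    by (simp only: sum_if_lower_half)
  also have "\<dots> = - 1"
    using assms by (simp add: d_def)
  finally show ?thesis
    by (simp add: mtrace_mult_Pplus[OF WU_carrier])
qed

lemma kron_one_mat: "kron (1\<^sub>m n) (1\<^sub>m m) = 1\<^sub>m (n * m)"
proof (rule eq_matI)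
  fix i j assume "i < dim_row (1\<^sub>m (n * m))" "j < dim_col (1\<^sub>m (n * m) :: complex mat)"
  then have ij: "i < n * m" "j < n * m" by simp_all
  then have "0 < m" by (cases m) simp_all
  with ij have "i div m < n" "j div m < n" "i mod m < m" "j mod m < m"
    by (auto simp: less_mult_imp_div_less)
  moreover have "(i div m = j div m \<and> i mod m = j mod m) = (i = j)"
    by (metis div_mult_mod_eq)
  ultimately show "kron (1\<^sub>m n) (1\<^sub>m m) $$ (i, j) = 1\<^sub>m (n * m) $$ (i, j)"
    using ij by (auto simp: kron_def)
qed (simp_all add: kron_def)

lemma mtrace_mult_iso_state:
  assumes "A \<in> carrier_mat (n * n) (n * n)"
  shows "mtrace (A * iso_state n lam) = complex_of_real (lam / (real n)\<^sup>2) * mtrace A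
    + complex_of_real (1 - lam) * mtrace (A * Pplus n)"
proof -
  let ?\<alpha> = "complex_of_real (lam / (real n)\<^sup>2)" and ?\<beta> = "complex_of_real (1 - lam)"
  have I: "1\<^sub>m (n * n) \<in> carrier_mat (n * n) (n * n)" and P: "Pplus n \<in> carrier_mat (n * n) (n * n)"
    by (simp_all add: Pplus_carrier)
  have "A * iso_state n lam = A * (?\<alpha> \<cdot>\<^sub>m 1\<^sub>m (n * n)) + A * (?\<beta> \<cdot>\<^sub>m Pplus n)"
    unfolding iso_state_def kron_one_mat
    by (rule mult_add_distrib_mat[OF assms smult_carrier_mat[OF I] smult_carrier_mat[OF P]])
  also have "\<dots> = ?\<alpha> \<cdot>\<^sub>m A + ?\<beta> \<cdot>\<^sub>m (A * Pplus n)"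
    using mult_smult_distrib[OF assms I] mult_smult_distrib[OF assms P] assms by simp
  finally have "A * iso_state n lam = ?\<alpha> \<cdot>\<^sub>m A + ?\<beta> \<cdot>\<^sub>m (A * Pplus n)" .
  then show ?thesis
    using assms Pplus_carrier
    by (simp add: mtrace_add[of _ "n * n"] mtrace_smult[of _ "n * n"])
qed

theorem lemma2:
  fixes N :: nat and U :: "complex mat" and lam :: real
  assumes "N \<ge> 1"
    and "unitary_mat (2 * N) U"
    and "transpose_mat U = - U"
    and "0 \<le> lam" and "lam \<le> 1"
    and "lam < real (4 * N) / real (4 * N + 1)"
  shows "mtrace (WU N U * iso_state (4 * N) lam) < 0"
proof -
  let ?n = "real (4 * N)"
  have N: "0 < N"
    using assms(1) by simp
  \<comment> \<open>Only the size of U matters: its term U X^T U^dagger in Phi never reaches the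
    entries of W that the trace picks up, so unitarity and antisymmetry are not needed.\<close>
  have U: "U \<in> carrier_mat (2 * N) (2 * N)"
    using assms(2) by (simp add: unitary_mat_def)
  have "mtrace (WU N U * iso_state (4 * N) lam) = complex_of_real (lam / ?n\<^sup>2 - (1 - lam) / ?n)"
    by (simp add: mtrace_mult_iso_state[OF WU_carrier] mtrace_WU[OF N] mtrace_WU_mult_Pplus[OF N U])
  moreover have "lam * (?n + 1) < ?n"
    using assms(6) N by (simp add: field_simps)
  then have "lam / ?n\<^sup>2 - (1 - lam) / ?n < 0"
    using N by (simp add: field_simps power2_eq_square)
  ultimately show ?thesis
    by (simp add: less_complex_def)
qed

end
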